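(* Let $\gamma>1$ and let $C_{tr}(\gamma)$ be a constant such that for all self-adjoint operators $A$, $B$ in a complex Hilbert space with $\sigma(A)\subset[0,\infty)$ and all $t>0$ for which $D_t=e^{-tB}-e^{-tA}$ is of trace class, one has $\sum_{\lambda\in \sigma^-(B)} |\lambda|^{\gamma}\leq C_{tr}(\gamma)t^{-\gamma}\|D_t\|_{tr}$. Then $$C_{tr}(\gamma)\geq -W(-\gamma e^{-\gamma})\big(\gamma+W(-\gamma e^{-\gamma})\big)^{\gamma-1}.$$
   Context: $\sigma^-(B)=\sigma(B)\cap(-\infty,0)$; sums over $\sigma^-(B)$ are taken with multiplicity. $\|\cdot\|_{tr}$ is the trace norm. $W$ is the Lambert W-function, defined on $[-e^{-1},\infty)$ as the inverse of $x\mapsto xe^x$ (principal branch, with values in $[-1,\infty)$). *)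

theory Defs
  imports "HOL-Analysis.Analysis" "Jordan_Normal_Form.Spectral_Radius" "Jordan_Normal_Form.Schur_Decomposition"
begin

text \<open>Finite-dimensional model: operators on the complex Hilbert space C^n are complex n x n matrices.\<close>

definition selfadjoint_mat :: "nat \<Rightarrow> complex mat \<Rightarrow> bool" where
  "selfadjoint_mat n A \<longleftrightarrow> A \<in> carrier_mat n n \<and> mat_adjoint A = A"

definition mat_exp :: "complex mat \<Rightarrow> complex mat" where
  "mat_exp M = mat (dim_row M) (dim_col M)
     (\<lambda>(i,j). \<Sum>k. (M ^\<^sub>m k) $$ (i,j) / of_nat (fact k))"

definition neg_spec_sum :: "real \<Rightarrow> complex mat \<Rightarrow> real" where
  "neg_spec_sum \<gamma> B = (\<Sum>z \<in> {z \<in> spectrum B. z \<in> \<real> \<and> Re z < 0}.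
      real (order z (char_poly B)) * (cmod z) powr \<gamma>)"

definition trace_norm :: "complex mat \<Rightarrow> real" where
  "trace_norm D = (\<Sum>\<mu> \<in> spectrum (mat_adjoint D * D).
      real (order \<mu> (char_poly (mat_adjoint D * D))) * sqrt (cmod \<mu>))"

text \<open>Principal branch of the Lambert W function on [-1/e, infinity).\<close>
definition lambertW :: "real \<Rightarrow> real" where
  "lambertW x = (THE w. w \<ge> -1 \<and> w * exp w = x)"

end

theory Submission imports Defs begin

text \<open>Already the scalar pair \<open>A = 0\<close>, \<open>B = -1\<close> forces \<open>t\<^sup>\<gamma> \<le> C (e\<^sup>t - 1)\<close> for every
  \<open>t > 0\<close>. The quotient \<open>t\<^sup>\<gamma> / (e\<^sup>t - 1)\<close> is maximal where \<open>t = \<gamma> (1 - e\<^sup>-\<^sup>t)\<close>, and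
  \<open>t = \<gamma> + w\<close> solves this equation exactly when \<open>w e\<^sup>w = -\<gamma> e\<^sup>-\<^sup>\<gamma>\<close>, i.e. for
  \<open>w = W(-\<gamma> e\<^sup>-\<^sup>\<gamma>)\<close>; there the quotient equals \<open>-w (\<gamma> + w)\<^sup>\<gamma>\<^sup>-\<^sup>1\<close>.\<close>

definition mat1x1 :: "'a \<Rightarrow> 'a mat" where
  "mat1x1 c = mat 1 1 (\<lambda>_. c)"

lemma mat1x1_carrier [simp]: "mat1x1 c \<in> carrier_mat 1 1"
  unfolding mat1x1_def by auto

lemma char_poly_mat1x1: "char_poly (mat1x1 (c :: 'a :: field)) = [:-c, 1:]"
proof -
  have "mat1x1 c = jordan_block 1 c"
    unfolding mat1x1_def jordan_block_def by (rule eq_matI) auto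
  then show ?thesis by (simp add: jordan_block_char_poly)
qed

lemma spectrum_mat1x1: "spectrum (mat1x1 (c :: 'a :: field)) = {c}"
  by (subst spectrum_root_char_poly[OF mat1x1_carrier]) (auto simp: char_poly_mat1x1)

lemma order_char_poly_mat1x1: "order c (char_poly (mat1x1 (c :: 'a :: field))) = 1"
  using order_power_n_n[of c 1] by (simp add: char_poly_mat1x1)

lemma mat_adjoint_mat1x1: "mat_adjoint (mat1x1 c) = mat1x1 (cnj c)"
  unfolding mat1x1_def mat_adjoint_def by (rule eq_matI) (auto simp: mat_of_rows_def cols_def)

lemma times_mat1x1: "mat1x1 a * mat1x1 b = mat1x1 (a * b)"
  unfolding mat1x1_def by (rule eq_matI) (auto simp: scalar_prod_def)

lemma minus_mat1x1: "mat1x1 a - mat1x1 b = mat1x1 (a - b)"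
  unfolding mat1x1_def by (rule eq_matI) auto

lemma smult_mat1x1: "c \<cdot>\<^sub>m mat1x1 a = mat1x1 (c * a)"
  unfolding mat1x1_def by (rule eq_matI) auto

lemma power_mat1x1: "mat1x1 (a :: 'a :: comm_ring_1) ^\<^sub>m k = mat1x1 (a ^ k)"
proof (induction k)
  case 0
  show ?case unfolding mat1x1_def by (auto intro!: eq_matI)
next
  case (Suc k)
  then show ?case by (simp add: times_mat1x1 mult.commute)
qed

lemma mat_exp_mat1x1: "mat_exp (mat1x1 a) = mat1x1 (exp a)"
proof -
  have "(\<Sum>k. a ^ k / of_nat (fact k)) = exp a"
    by (simp add: exp_def scaleR_conv_of_real divide_inverse mult.commute)
  then show ?thesis
    unfolding mat_exp_def power_mat1x1 by (auto simp: mat1x1_def intro!: eq_matI)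
qed

lemma selfadjoint_mat1x1: "c \<in> \<real> \<Longrightarrow> selfadjoint_mat 1 (mat1x1 c)"
  using mat1x1_carrier[of c] unfolding selfadjoint_mat_def mat_adjoint_mat1x1
  by (auto simp: Reals_cnj_iff)

lemma trace_norm_mat1x1: "trace_norm (mat1x1 d) = cmod d"
proof -
  have "trace_norm (mat1x1 d) = sqrt (cmod (cnj d * d))"
    unfolding trace_norm_def mat_adjoint_mat1x1 times_mat1x1 spectrum_mat1x1
    by (simp add: order_char_poly_mat1x1)
  also have "\<dots> = cmod d"
    by (simp add: norm_mult real_sqrt_mult)
  finally show ?thesis .
qed

lemma neg_spec_sum_mat1x1:
  assumes "c \<in> \<real>" "Re c < 0"
  shows "neg_spec_sum \<gamma> (mat1x1 c) = cmod c powr \<gamma>"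
proof -
  have "{z \<in> spectrum (mat1x1 c). z \<in> \<real> \<and> Re z < 0} = {c}"
    using assms by (auto simp: spectrum_mat1x1)
  then show ?thesis
    unfolding neg_spec_sum_def by (simp add: order_char_poly_mat1x1)
qed

lemma trace_norm_heat_difference_mat1x1:
  "trace_norm (mat_exp ((- complex_of_real t) \<cdot>\<^sub>m mat1x1 (-1))
     - mat_exp ((- complex_of_real t) \<cdot>\<^sub>m mat1x1 0)) = \<bar>exp t - 1\<bar>"
proof -
  have "trace_norm (mat_exp ((- complex_of_real t) \<cdot>\<^sub>m mat1x1 (-1))
      - mat_exp ((- complex_of_real t) \<cdot>\<^sub>m mat1x1 0)) = cmod (exp (complex_of_real t) - 1)"
    unfolding smult_mat1x1 mat_exp_mat1x1 minus_mat1x1 trace_norm_mat1x1 by simp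
  also have "exp (complex_of_real t) - 1 = complex_of_real (exp t - 1)"
    by (simp add: exp_of_real)
  finally show ?thesis
    by (simp only: norm_of_real)
qed

lemma strict_mono_on_times_exp: "strict_mono_on {-1..} (\<lambda>x::real. x * exp x)"
proof (rule strict_mono_onI)
  fix a b :: real
  assume "a \<in> {-1..}" "a < b"
  show "a * exp a < b * exp b"
  proof (rule DERIV_pos_imp_increasing_open[OF \<open>a < b\<close>])
    fix x assume "a < x"
    have "((\<lambda>x. x * exp x) has_real_derivative exp x * (1 + x)) (at x)"
      by (auto intro!: derivative_eq_intros simp: algebra_simps)
    moreover have "0 < exp x * (1 + x)"
      using \<open>a \<in> {-1..}\<close> \<open>a < x\<close> by simp
    ultimately show "\<exists>y. ((\<lambda>x. x * exp x) has_real_derivative y) (at x) \<and> 0 < y"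
      by blast
  qed (intro continuous_intros)
qed

lemma lambertW:
  assumes "- exp (-1) \<le> y"
  shows "lambertW y \<ge> -1" and "lambertW y * exp (lambertW y) = y"
proof -
  have "\<bar>y\<bar> \<le> \<bar>y\<bar> * exp \<bar>y\<bar>"
    by (simp add: mult_le_cancel_left1)
  then have "(-1) * exp (-1) \<le> y" "y \<le> \<bar>y\<bar> * exp \<bar>y\<bar>" "-1 \<le> \<bar>y\<bar>"
    using assms by auto
  moreover have "continuous_on {-1..\<bar>y\<bar>} (\<lambda>x::real. x * exp x)"
    by (intro continuous_intros)
  ultimately have "\<exists>w. -1 \<le> w \<and> w \<le> \<bar>y\<bar> \<and> w * exp w = y"
    by (rule IVT'[where f = "\<lambda>x. x * exp x"])
  then obtain w where w: "-1 \<le> w" "w * exp w = y"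
    by blast
  have "v = w" if "-1 \<le> v" "v * exp v = y" for v
    using strict_mono_on_eqD[OF strict_mono_on_times_exp, of v w] that w by simp
  then have "\<exists>!w. w \<ge> -1 \<and> w * exp w = y"
    using w by blast
  then have "lambertW y \<ge> -1 \<and> lambertW y * exp (lambertW y) = y"
    unfolding lambertW_def by (rule theI')
  then show "lambertW y \<ge> -1" "lambertW y * exp (lambertW y) = y"
    by auto
qed

lemma lambertW_neg:
  assumes "- exp (-1) \<le> y" "y < 0"
  shows "lambertW y < 0"
proof (rule ccontr)
  assume "\<not> lambertW y < 0"
  then have "0 \<le> lambertW y * exp (lambertW y)"
    by simp
  then show False
    using lambertW(2)[OF assms(1)] assms(2) by simp
qed

lemma times_exp_minus_le: "x * exp (- x) \<le> exp (-1 :: real)"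
proof -
  have "x \<le> exp (x - 1)"
    using exp_ge_add_one_self[of "x - 1"] by simp
  then have "x * exp (- x) \<le> exp (x - 1) * exp (- x)"
    by simp
  also have "\<dots> = exp (-1)"
    by (simp flip: exp_add)
  finally show ?thesis .
qed

text \<open>The fixed-point equation of the maximiser of \<open>t\<^sup>\<gamma> / (e\<^sup>t - 1)\<close>.\<close>

lemma exp_minus_one_lambertW_shift:
  fixes \<gamma> :: real
  defines "w \<equiv> lambertW (- \<gamma> * exp (- \<gamma>))"
  assumes "\<gamma> > 0"
  shows "exp (\<gamma> + w) - 1 = (\<gamma> + w) / (- w)"
proof -
  have y: "- exp (-1) \<le> - \<gamma> * exp (- \<gamma>)" "- \<gamma> * exp (- \<gamma>) < 0"
    using times_exp_minus_le[of \<gamma>] \<open>\<gamma> > 0\<close> by auto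
  have "w * exp (\<gamma> + w) = (w * exp w) * exp \<gamma>"
    by (simp add: exp_add)
  also have "\<dots> = - \<gamma>"
    using lambertW(2)[OF y(1)] by (simp add: w_def flip: exp_add)
  finally have "w * exp (\<gamma> + w) = - \<gamma>" .
  moreover have "w < 0"
    unfolding w_def using lambertW_neg[OF y] .
  ultimately show ?thesis
    by (simp add: field_simps)
qed

lemma powr_le_of_scalar_test:
  fixes \<gamma> C t :: real
  assumes "t > 0"
    and "neg_spec_sum \<gamma> (mat1x1 (-1)) \<le> C * t powr (-\<gamma>) *
           trace_norm (mat_exp ((- complex_of_real t) \<cdot>\<^sub>m mat1x1 (-1))
             - mat_exp ((- complex_of_real t) \<cdot>\<^sub>m mat1x1 0))"
  shows "t powr \<gamma> \<le> C * (exp t - 1)"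
proof -
  have "1 \<le> C * t powr (-\<gamma>) * (exp t - 1)"
    using assms(2) neg_spec_sum_mat1x1[of "-1" \<gamma>] \<open>t > 0\<close>
    by (simp only: trace_norm_heat_difference_mat1x1) simp
  then have "t powr \<gamma> * 1 \<le> t powr \<gamma> * (C * t powr (-\<gamma>) * (exp t - 1))"
    by (intro mult_left_mono) auto
  also have "\<dots> = C * (exp t - 1)"
    using \<open>t > 0\<close> by (simp add: powr_minus)
  finally show ?thesis
    by simp
qed

theorem proposition1:
  fixes \<gamma> C :: real
  assumes "\<gamma> > 1"
    and "\<forall>(n::nat) (A::complex mat) (B::complex mat) (t::real).
           selfadjoint_mat n A \<and> selfadjoint_mat n B \<and> spectrum A \<subseteq> {z. z \<in> \<real> \<and> Re z \<ge> 0} \<and> t > 0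
           \<longrightarrow> neg_spec_sum \<gamma> B \<le>
               C * t powr (-\<gamma>) * trace_norm (mat_exp ((- complex_of_real t) \<cdot>\<^sub>m B) - mat_exp ((- complex_of_real t) \<cdot>\<^sub>m A))"
  shows "C \<ge> - lambertW (- \<gamma> * exp (- \<gamma>)) * (\<gamma> + lambertW (- \<gamma> * exp (- \<gamma>))) powr (\<gamma> - 1)"
proof -
  have scalar_test: "t powr \<gamma> \<le> C * (exp t - 1)" if "t > 0" for t
    using assms(2)[rule_format, of 1 "mat1x1 0" "mat1x1 (-1)" t] \<open>t > 0\<close>
      selfadjoint_mat1x1[of 0] selfadjoint_mat1x1[of "-1"]
    by (intro powr_le_of_scalar_test) (auto simp: spectrum_mat1x1)
  define w where "w = lambertW (- \<gamma> * exp (- \<gamma>))"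
  define s where "s = \<gamma> + w"
  have "- exp (-1) \<le> - \<gamma> * exp (- \<gamma>)"
    using times_exp_minus_le[of \<gamma>] by simp
  then have "w \<ge> -1" "w < 0"
    using lambertW(1) lambertW_neg assms(1) by (auto simp: w_def)
  then have "s > 0"
    using assms(1) by (simp add: s_def)
  have "s * s powr (\<gamma> - 1) = s powr \<gamma>"
    using \<open>s > 0\<close> powr_add[of s 1 "\<gamma> - 1"] by simp
  also have "\<dots> \<le> C * (s / (- w))"
    using scalar_test[OF \<open>s > 0\<close>] exp_minus_one_lambertW_shift[of \<gamma>] assms(1)
    by (simp add: s_def w_def)
  finally have "s * (- w * s powr (\<gamma> - 1)) \<le> s * C"
    using \<open>w < 0\<close> by (simp add: divide_simps mult.commute mult.left_commute)
  then have "- w * s powr (\<gamma> - 1) \<le> C"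
    using \<open>s > 0\<close> by (simp only: mult_le_cancel_left_pos)
  then show ?thesis
    by (simp add: w_def s_def)
qed

end
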